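(* Let $(\mathcal{Z},\nu)$ be a measurable space with a $\sigma$-finite measure $\nu$, let $P$ be a probability measure on $\mathcal{Z}$ with $P\ll\nu$ and density $\rho=dP/d\nu$ satisfying $\rho>0$ $\nu$-almost everywhere. Let $\omega:\mathcal{Z}\times\mathcal{Z}\to[0,\infty)$ be measurable and symmetric, $\omega(z,\tilde z)=\omega(\tilde z,z)$, and assume $$C_\rho:=\iint\frac{(\rho(z)-\rho(\tilde z))^2}{\rho(z)+\rho(\tilde z)}\,\omega(z,\tilde z)\,\nu(dz)\nu(d\tilde z)<\infty,\qquad \iint\rho(z)\,\omega(z,\tilde z)\,\nu(dz)\nu(d\tilde z)<\infty.$$ For a measurable $f_\theta:\mathcal{Z}\to\mathbb{R}$ define $T_\theta(z,\tilde z)=\tanh\big((f_\theta(z)-f_\theta(\tilde z))/2\big)$, $$\mathcal{J}_\omega(\theta)=\iint\left[T_\theta(z,\tilde z)-\frac{\rho(z)-\rho(\tilde z)}{\rho(z)+\rho(\tilde z)}\right]^2(\rho(z)+\rho(\tilde z))\,\omega(z,\tilde z)\,\nu(dz)\nu(d\tilde z),$$ $$\mathcal{L}_\omega(\theta)=\iint\big[T_\theta(z,\tilde z)-1\big]^2\,\omega(z,\tilde z)\,\rho(z)\,\nu(dz)\nu(d\tilde z).$$ Then $\mathcal{J}_\omega(\theta)=2\mathcal{L}_\omega(\theta)+C_\rho'$, where $C_\rho'=C_\rho-2\iint\rho(z)\omega(z,\tilde z)\,\nu(dz)\nu(d\tilde z)$ does not depend on $f_\theta$. In particular, minimizing $\mathcal{J}_\omega$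 over $f_\theta$ is equivalent to minimizing $\mathcal{L}_\omega$.
   Context: $f_\theta$ is a scalar "energy" function parameterized by $\theta$; all statements concern the dependence on the function $f_\theta$. *)

theory Defs
  imports "HOL-Analysis.Analysis" "HOL-Probability.Probability"
begin

definition Tth :: "('a \<Rightarrow> real) \<Rightarrow> 'a \<Rightarrow> 'a \<Rightarrow> real" where
  "Tth f z w = tanh ((f z - f w) / 2)"

definition J_omega :: "'a measure \<Rightarrow> ('a \<Rightarrow> real) \<Rightarrow> ('a \<times> 'a \<Rightarrow> real) \<Rightarrow> ('a \<Rightarrow> real) \<Rightarrow> real" where
  "J_omega nu \<rho> \<omega> f = (\<integral>p. (case p of (z, w) \<Rightarrow>
      (Tth f z w - (\<rho> z - \<rho> w) / (\<rho> z + \<rho> w))\<^sup>2 * (\<rho> z + \<rho> w) * \<omega> (z, w))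
      \<partial>(nu \<Otimes>\<^sub>M nu))"

definition L_omega :: "'a measure \<Rightarrow> ('a \<Rightarrow> real) \<Rightarrow> ('a \<times> 'a \<Rightarrow> real) \<Rightarrow> ('a \<Rightarrow> real) \<Rightarrow> real" where
  "L_omega nu \<rho> \<omega> f = (\<integral>p. (case p of (z, w) \<Rightarrow>
      (Tth f z w - 1)\<^sup>2 * \<omega> (z, w) * \<rho> z) \<partial>(nu \<Otimes>\<^sub>M nu))"

definition C_rho :: "'a measure \<Rightarrow> ('a \<Rightarrow> real) \<Rightarrow> ('a \<times> 'a \<Rightarrow> real) \<Rightarrow> real" where
  "C_rho nu \<rho> \<omega> = (\<integral>p. (case p of (z, w) \<Rightarrow>
      (\<rho> z - \<rho> w)\<^sup>2 / (\<rho> z + \<rho> w) * \<omega> (z, w)) \<partial>(nu \<Otimes>\<^sub>M nu))"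

definition C_rho' :: "'a measure \<Rightarrow> ('a \<Rightarrow> real) \<Rightarrow> ('a \<times> 'a \<Rightarrow> real) \<Rightarrow> real" where
  "C_rho' nu \<rho> \<omega> = C_rho nu \<rho> \<omega>
      - 2 * (\<integral>p. (case p of (z, w) \<Rightarrow> \<rho> z * \<omega> (z, w)) \<partial>(nu \<Otimes>\<^sub>M nu))"

end

theory Submission
  imports Defs
begin

text \<open>Write \<open>l(z, w) = (T(z, w) - 1)\<^sup>2 \<omega>(z, w) \<rho>(z)\<close> for the integrand of \<open>\<L>\<^sub>\<omega>\<close>.
  Since \<open>T\<close> is antisymmetric and \<open>\<omega>\<close> symmetric, expanding the square in \<open>\<J>\<^sub>\<omega>\<close> gives pointwise
  \<open>l(z, w) + l(w, z) - \<omega>(z, w) (\<rho>(z) + \<rho>(w)) + (\<rho>(z) - \<rho>(w))\<^sup>2 \<omega>(z, w) / (\<rho>(z) + \<rho>(w))\<close>.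
  Integrating, the swapped terms contribute as much as the unswapped ones, which yields
  \<open>\<J>\<^sub>\<omega> = 2 \<L>\<^sub>\<omega> - 2 \<integral>\<integral> \<rho> \<omega> + C\<^sub>\<rho>\<close>. Integrability of \<open>l\<close> comes from \<open>|T| \<le> 1\<close>, so that
  \<open>l \<le> 4 \<rho> \<omega>\<close>.\<close>

lemma Tth_antisym: "Tth f w z = - Tth f z w"
  unfolding Tth_def by (metis minus_divide_left minus_diff_eq tanh_minus)

lemma abs_Tth_le_1: "\<bar>Tth f z w\<bar> \<le> 1"
  unfolding Tth_def using tanh_real_bounds[of "(f z - f w) / 2"] by auto

lemma Tth_measurable:
  assumes "f \<in> borel_measurable M"
  shows "(\<lambda>(z, w). Tth f z w) \<in> borel_measurable (M \<Otimes>\<^sub>M M)"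
proof -
  have "(tanh :: real \<Rightarrow> real) \<in> borel_measurable borel"
    by (intro borel_measurable_continuous_onI continuous_on_tanh continuous_on_id) auto
  moreover have "(\<lambda>p. (f (fst p) - f (snd p)) / 2) \<in> borel_measurable (M \<Otimes>\<^sub>M M)"
    using assms by measurable
  ultimately show ?thesis
    unfolding Tth_def case_prod_beta by (rule measurable_compose[rotated])
qed

lemma integrable_swap:
  fixes h :: "'a \<times> 'a \<Rightarrow> real"
  assumes "sigma_finite_measure M" and h: "integrable (M \<Otimes>\<^sub>M M) h"
  shows "integrable (M \<Otimes>\<^sub>M M) (\<lambda>p. h (snd p, fst p))"
proof -
  interpret pair_sigma_finite M M
    using assms(1) by (simp add: pair_sigma_finite_def)
  show ?thesis
    using integrable_product_swap[OF h] by (simp add: case_prod_beta')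
qed

lemma integral_add_swap:
  fixes h :: "'a \<times> 'a \<Rightarrow> real"
  assumes "sigma_finite_measure M" and h: "integrable (M \<Otimes>\<^sub>M M) h"
  shows "(\<integral>p. h p + h (snd p, fst p) \<partial>(M \<Otimes>\<^sub>M M)) = 2 * integral\<^sup>L (M \<Otimes>\<^sub>M M) h"
proof -
  interpret pair_sigma_finite M M
    using assms(1) by (simp add: pair_sigma_finite_def)
  have "(\<integral>p. h (snd p, fst p) \<partial>(M \<Otimes>\<^sub>M M)) = integral\<^sup>L (M \<Otimes>\<^sub>M M) h"
    using integral_product_swap[OF borel_measurable_integrable[OF h]] by (simp add: case_prod_beta')
  then show ?thesis
    using h integrable_swap[OF assms] by simp
qed

lemma square_deviation_split:
  fixes a b t q :: real
  assumes "0 \<le> a" "0 \<le> b"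
  shows "(t - (a - b) / (a + b))\<^sup>2 * (a + b) * q
    = (t - 1)\<^sup>2 * q * a + (- t - 1)\<^sup>2 * q * b - (a * q + b * q) + (a - b)\<^sup>2 / (a + b) * q"
proof (cases "a + b = 0")
  case True
  with assms have "a = 0" "b = 0"
    by auto
  then show ?thesis
    by simp
next
  case False
  define r where "r = (a - b) / (a + b)"
  have "(t - r)\<^sup>2 * (a + b) * q = (t\<^sup>2 * (a + b) - 2 * t * (r * (a + b)) + r\<^sup>2 * (a + b)) * q"
    by (simp add: power2_eq_square algebra_simps)
  also have "\<dots> = (t\<^sup>2 * (a + b) - 2 * t * (a - b) + (a - b)\<^sup>2 / (a + b)) * q"
    using False by (simp add: r_def power2_eq_square)
  also have "\<dots> = (t - 1)\<^sup>2 * q * a + (- t - 1)\<^sup>2 * q * b - (a * q + b * q) + (a - b)\<^sup>2 / (a + b) * q"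
    by (simp add: power2_eq_square algebra_simps)
  finally show ?thesis
    unfolding r_def .
qed

lemma integrable_L_omega_integrand:
  fixes \<rho> :: "'a \<Rightarrow> real" and \<omega> :: "'a \<times> 'a \<Rightarrow> real"
  assumes "\<rho> \<in> borel_measurable M" "\<And>z. 0 \<le> \<rho> z"
    and "\<omega> \<in> borel_measurable (M \<Otimes>\<^sub>M M)" "\<And>z w. 0 \<le> \<omega> (z, w)"
    and \<rho>\<omega>: "integrable (M \<Otimes>\<^sub>M M) (\<lambda>(z, w). \<rho> z * \<omega> (z, w))"
    and "f \<in> borel_measurable M"
  shows "integrable (M \<Otimes>\<^sub>M M) (\<lambda>(z, w). (Tth f z w - 1)\<^sup>2 * \<omega> (z, w) * \<rho> z)"
proof -
  have majorant: "integrable (M \<Otimes>\<^sub>M M) (\<lambda>(z, w). 4 * (\<rho> z * \<omega> (z, w)))"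
    using integrable_mult_right[OF \<rho>\<omega>, of 4] by (simp add: case_prod_beta')
  have meas: "(\<lambda>(z, w). (Tth f z w - 1)\<^sup>2 * \<omega> (z, w) * \<rho> z) \<in> borel_measurable (M \<Otimes>\<^sub>M M)"
    using Tth_measurable[OF \<open>f \<in> borel_measurable M\<close>] assms(1,3) by measurable
  have bound: "(Tth f z w - 1)\<^sup>2 * \<omega> (z, w) * \<rho> z \<le> 4 * (\<rho> z * \<omega> (z, w))" for z w
  proof -
    have "\<bar>Tth f z w - 1\<bar> \<le> \<bar>2\<bar>"
      using abs_Tth_le_1[of f z w] by simp
    then have "(Tth f z w - 1)\<^sup>2 \<le> 2\<^sup>2"
      by (simp only: abs_le_square_iff)
    then have "(Tth f z w - 1)\<^sup>2 * (\<omega> (z, w) * \<rho> z) \<le> 4 * (\<omega> (z, w) * \<rho> z)"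
      by (intro mult_right_mono) (simp_all add: assms(2,4))
    then show ?thesis
      by (simp add: mult_ac)
  qed
  show ?thesis
    by (intro Bochner_Integration.integrable_bound[OF majorant meas] AE_I2) (auto simp: bound assms(2,4))
qed

theorem J_omega_eq_2_L_omega_plus_C_rho':
  fixes \<rho> :: "'a \<Rightarrow> real" and \<omega> :: "'a \<times> 'a \<Rightarrow> real"
  assumes sf: "sigma_finite_measure M"
    and \<rho>: "\<rho> \<in> borel_measurable M" "\<And>z. 0 \<le> \<rho> z"
    and \<omega>: "\<omega> \<in> borel_measurable (M \<Otimes>\<^sub>M M)" "\<And>z w. 0 \<le> \<omega> (z, w)"
    and \<omega>_sym: "\<And>z w. \<omega> (z, w) = \<omega> (w, z)"
    and C: "integrable (M \<Otimes>\<^sub>M M) (\<lambda>(z, w). (\<rho> z - \<rho> w)\<^sup>2 / (\<rho> z + \<rho> w) * \<omega> (z, w))"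
    and \<rho>\<omega>: "integrable (M \<Otimes>\<^sub>M M) (\<lambda>(z, w). \<rho> z * \<omega> (z, w))"
    and f: "f \<in> borel_measurable M"
  shows "J_omega M \<rho> \<omega> f = 2 * L_omega M \<rho> \<omega> f + C_rho' M \<rho> \<omega>"
proof -
  define l where "l = (\<lambda>(z, w). (Tth f z w - 1)\<^sup>2 * \<omega> (z, w) * \<rho> z)"
  define R where "R = (\<lambda>(z, w). \<rho> z * \<omega> (z, w))"
  define c where "c = (\<lambda>(z, w). (\<rho> z - \<rho> w)\<^sup>2 / (\<rho> z + \<rho> w) * \<omega> (z, w))"
  have l_int: "integrable (M \<Otimes>\<^sub>M M) l"
    unfolding l_def using integrable_L_omega_integrand[OF \<rho> \<omega> \<rho>\<omega> f] .
  have R_int: "integrable (M \<Otimes>\<^sub>M M) R" and c_int: "integrable (M \<Otimes>\<^sub>M M) c"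
    unfolding R_def c_def using \<rho>\<omega> C .
  have split: "(Tth f z w - (\<rho> z - \<rho> w) / (\<rho> z + \<rho> w))\<^sup>2 * (\<rho> z + \<rho> w) * \<omega> (z, w)
      = (l (z, w) + l (w, z)) - (R (z, w) + R (w, z)) + c (z, w)" for z w
    using square_deviation_split[OF \<rho>(2)[of z] \<rho>(2)[of w], of "Tth f z w" "\<omega> (z, w)"]
    by (simp add: l_def R_def c_def Tth_antisym[of f w z] \<omega>_sym[of w z] mult_ac)
  have "J_omega M \<rho> \<omega> f
      = (\<integral>p. (l p + l (snd p, fst p)) - (R p + R (snd p, fst p)) + c p \<partial>(M \<Otimes>\<^sub>M M))"
    unfolding J_omega_def by (intro Bochner_Integration.integral_cong) (auto simp: split)
  also have "\<dots> = 2 * integral\<^sup>L (M \<Otimes>\<^sub>M M) l - 2 * integral\<^sup>L (M \<Otimes>\<^sub>M M) R + integral\<^sup>L (M \<Otimes>\<^sub>M M) c"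
    using integral_add_swap[OF sf l_int] integral_add_swap[OF sf R_int] c_int
      integrable_swap[OF sf l_int] integrable_swap[OF sf R_int] l_int R_int
    by simp
  finally show ?thesis
    unfolding L_omega_def C_rho'_def C_rho_def l_def R_def c_def by simp
qed

theorem theorem1:
  fixes nu P :: "'a measure" and \<rho> :: "'a \<Rightarrow> real" and \<omega> :: "'a \<times> 'a \<Rightarrow> real"
    and f :: "'a \<Rightarrow> real"
  assumes sf: "sigma_finite_measure nu"
    and P_prob: "prob_space P"
    and P_dens: "P = density nu (\<lambda>z. ennreal (\<rho> z))"
    and rho_meas: "\<rho> \<in> borel_measurable nu"
    and rho_nonneg: "\<And>z. 0 \<le> \<rho> z"
    and rho_pos: "AE z in nu. 0 < \<rho> z"
    and omega_meas: "\<omega> \<in> borel_measurable (nu \<Otimes>\<^sub>M nu)"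
    and omega_nonneg: "\<And>z w. 0 \<le> \<omega> (z, w)"
    and omega_sym: "\<And>z w. \<omega> (z, w) = \<omega> (w, z)"
    and C_fin: "integrable (nu \<Otimes>\<^sub>M nu)
                  (\<lambda>(z, w). (\<rho> z - \<rho> w)\<^sup>2 / (\<rho> z + \<rho> w) * \<omega> (z, w))"
    and rho_omega_fin: "integrable (nu \<Otimes>\<^sub>M nu) (\<lambda>(z, w). \<rho> z * \<omega> (z, w))"
    and f_meas: "f \<in> borel_measurable nu"
  shows "J_omega nu \<rho> \<omega> f = 2 * L_omega nu \<rho> \<omega> f + C_rho' nu \<rho> \<omega>
         \<and> (\<forall>g \<in> borel_measurable nu.
               (J_omega nu \<rho> \<omega> f \<le> J_omega nu \<rho> \<omega> g) \<longleftrightarrow> (L_omega nu \<rho> \<omega> f \<le> L_omega nu \<rho> \<omega> g))"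
proof -
  have "J_omega nu \<rho> \<omega> g = 2 * L_omega nu \<rho> \<omega> g + C_rho' nu \<rho> \<omega>"
    if "g \<in> borel_measurable nu" for g
    using J_omega_eq_2_L_omega_plus_C_rho'[OF sf rho_meas rho_nonneg omega_meas omega_nonneg
        omega_sym C_fin rho_omega_fin that] .
  with f_meas show ?thesis
    by auto
qed

end
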